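(* Let $G$ be a full, flexible group of homeomorphisms of the Cantor set $\{0,1\}^\omega$. Suppose that: (1) for all $g\in G$ both $(1,g)$ and $(g,1)$ lie in $G$, and every element of $G$ supported on $I_0$ or on $I_1$ has this form; (2) for all $g\in G$ there exists $h\in G$ with $h=(g,h)$; and (3) the homeomorphism $x_0$ lies in $G$. Then $G$ is simple.
   Context: $I_\alpha$ is the set of sequences beginning with the finite word $\alpha$. $G$ is full if every homeomorphism $h$ of $\{0,1\}^\omega$ that locally agrees with $G$ (each point has a neighborhood $U$ and some $g\in G$ with $h|_U=g|_U$) belongs to $G$. $G$ is flexible if for every pair $E_1,E_2$ of proper nonempty clopen subsets there is $g\in G$ with $g(E_1)\subseteq E_2$. For homeomorphisms $f,g$, $(f,g)$ is the homeomorphism with $(f,g)(0\zeta)=0f(\zeta)$, $(f,g)(1\zeta)=1g(\zeta)$; $1$ denotes the identity. An element is supported on $E$ if it is the identity off $E$. $x_0$ is the homeomorphism (first generator of Thompson's group $F$) with $x_0(00\zeta)=0\zeta$, $x_0(01\zeta)=10\zeta$, $x_0(1\zeta)=11\zeta$ for all $\zeta\in\{0,1\}^\omega$. *)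

theory Defs
  imports "HOL-Analysis.Analysis" "HOL-Algebra.Algebra"
begin

text \<open>Cantor space: infinite binary sequences, nat \<Rightarrow> bool (False = 0, True = 1),
  with the product topology (library instance on function spaces).\<close>

type_synonym cantor = "nat \<Rightarrow> bool"

definition is_homeo :: "(cantor \<Rightarrow> cantor) \<Rightarrow> bool" where
  "is_homeo h \<longleftrightarrow> (\<exists>k. homeomorphism UNIV UNIV h k)"

definition homeo_group :: "(cantor \<Rightarrow> cantor) set \<Rightarrow> bool" where
  "homeo_group S \<longleftrightarrow> (\<forall>g\<in>S. is_homeo g) \<and> id \<in> S \<and>
     (\<forall>f\<in>S. \<forall>g\<in>S. f \<circ> g \<in> S) \<and> (\<forall>g\<in>S. inv_into UNIV g \<in> S)"

definition homeo_grp :: "(cantor \<Rightarrow> cantor) set \<Rightarrow> (cantor \<Rightarrow> cantor) monoid" where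
  "homeo_grp S = \<lparr>carrier = S, mult = (\<circ>), one = id\<rparr>"

text \<open>Simplicity: nontrivial and no normal subgroups except the trivial one and the whole group.
  (The library locale simple_group uses the cardinality of the carrier, which is
   meaningless for infinite groups, so we spell it out.)\<close>
definition simple_grp :: "('a, 'b) monoid_scheme \<Rightarrow> bool" where
  "simple_grp H \<longleftrightarrow> group H \<and> carrier H \<noteq> {\<one>\<^bsub>H\<^esub>} \<and>
     (\<forall>N. N \<lhd> H \<longrightarrow> N = {\<one>\<^bsub>H\<^esub>} \<or> N = carrier H)"

definition clopen :: "cantor set \<Rightarrow> bool" where
  "clopen E \<longleftrightarrow> open E \<and> closed E"

definition full :: "(cantor \<Rightarrow> cantor) set \<Rightarrow> bool" where
  "full S \<longleftrightarrow> (\<forall>h. is_homeo h \<and>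
      (\<forall>x. \<exists>U. open U \<and> x \<in> U \<and> (\<exists>g\<in>S. \<forall>y\<in>U. h y = g y)) \<longrightarrow> h \<in> S)"

definition flexible :: "(cantor \<Rightarrow> cantor) set \<Rightarrow> bool" where
  "flexible S \<longleftrightarrow> (\<forall>E1 E2. clopen E1 \<and> E1 \<noteq> {} \<and> E1 \<noteq> UNIV \<and>
      clopen E2 \<and> E2 \<noteq> {} \<and> E2 \<noteq> UNIV \<longrightarrow> (\<exists>g\<in>S. g ` E1 \<subseteq> E2))"

definition ccons :: "bool \<Rightarrow> cantor \<Rightarrow> cantor" where
  "ccons b \<zeta> = case_nat b \<zeta>"

definition ctail :: "cantor \<Rightarrow> cantor" where
  "ctail \<xi> = (\<lambda>n. \<xi> (Suc n))"

definition pair_homeo :: "(cantor \<Rightarrow> cantor) \<Rightarrow> (cantor \<Rightarrow> cantor) \<Rightarrow> cantor \<Rightarrow> cantor" where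
  "pair_homeo f g \<xi> = (if \<xi> 0 then ccons True (g (ctail \<xi>)) else ccons False (f (ctail \<xi>)))"

definition supported_on :: "(cantor \<Rightarrow> cantor) \<Rightarrow> cantor set \<Rightarrow> bool" where
  "supported_on g E \<longleftrightarrow> (\<forall>x. x \<notin> E \<longrightarrow> g x = x)"

definition I0 :: "cantor set" where "I0 = {\<xi>. \<xi> 0 = False}"
definition I1 :: "cantor set" where "I1 = {\<xi>. \<xi> 0 = True}"

text \<open>x0(00\<zeta>) = 0\<zeta>, x0(01\<zeta>) = 10\<zeta>, x0(1\<zeta>) = 11\<zeta>.\<close>
definition x0 :: "cantor \<Rightarrow> cantor" where
  "x0 \<xi> = (if \<not> \<xi> 0 then
              (if \<not> \<xi> 1 then ccons False (ctail (ctail \<xi>))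
               else ccons True (ccons False (ctail (ctail \<xi>))))
            else ccons True (ccons True (ctail \<xi>)))"

end

theory Submission
  imports Defs
begin

(* Let N be a nontrivial normal subgroup of G. An element n of N other than the identity
   moves some clopen set E off itself; for a, b supported in E the element
   a (n a^-1 n^-1) lies in N and its second factor commutes with b, which puts the
   commutator [a, b] into N. By flexibility every commutator of elements supported in a
   proper clopen set lies in N. Choosing h = (g, h), the commutator of (1, h) with
   y0 = x0 (x0^-1, 1) is (1, (g, 1)); by the support hypotheses every element supported
   in I_10 has this form, so it lies in N, and by flexibility so does every element with
   proper clopen support. Finally, fullness writes an arbitrary f as t (t f), where the
   involution t exchanges a clopen set A with f(A); both factors have proper clopen
   support. *)

(* HOL-Algebra's structure syntax for inverses hides Hilbert_Choice.inv. *)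
abbreviation hinv :: "(cantor \<Rightarrow> cantor) \<Rightarrow> cantor \<Rightarrow> cantor" where
  "hinv f \<equiv> inv_into UNIV f"

section \<open>Binary sequences\<close>

lemma ccons_0 [simp]: "ccons b \<zeta> 0 = b"
  by (simp add: ccons_def)

lemma ccons_Suc [simp]: "ccons b \<zeta> (Suc n) = \<zeta> n"
  by (simp add: ccons_def)

lemma ctail_ccons [simp]: "ctail (ccons b \<zeta>) = \<zeta>"
  by (simp add: ctail_def ccons_def)

lemma ctail_apply [simp]: "ctail \<xi> n = \<xi> (Suc n)"
  by (simp add: ctail_def)

lemma ccons_ctail: "ccons (\<xi> 0) (ctail \<xi>) = \<xi>"
  by (rule ext) (simp add: ccons_def split: nat.split)

lemma ccons_1 [simp]: "ccons b \<zeta> 1 = \<zeta> 0"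
  by (simp add: ccons_def)

lemma ccons_eq_iff [simp]: "ccons a \<xi> = ccons b \<eta> \<longleftrightarrow> a = b \<and> \<xi> = \<eta>"
proof
  assume eq: "ccons a \<xi> = ccons b \<eta>"
  show "a = b \<and> \<xi> = \<eta>"
    using arg_cong[OF eq, of "\<lambda>\<zeta>. \<zeta> 0"] arg_cong[OF eq, of ctail] by simp
qed simp

lemma cantor_cases3:
  assumes "\<And>\<zeta>. \<forall>a b c. P (ccons a (ccons b (ccons c \<zeta>)))"
  shows "P \<xi>"
proof -
  have "\<xi> = ccons (\<xi> 0) (ccons (\<xi> 1) (ccons (\<xi> 2) (ctail (ctail (ctail \<xi>)))))"
    by (rule ext) (simp add: ccons_def numeral_2_eq_2 split: nat.split)
  then show ?thesis
    using assms by metis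
qed

lemma pair_homeo_False [simp]: "pair_homeo f g (ccons False \<zeta>) = ccons False (f \<zeta>)"
  by (simp add: pair_homeo_def)

lemma pair_homeo_True [simp]: "pair_homeo f g (ccons True \<zeta>) = ccons True (g \<zeta>)"
  by (simp add: pair_homeo_def)

lemma x0_00 [simp]: "x0 (ccons False (ccons False \<zeta>)) = ccons False \<zeta>"
  by (simp add: x0_def)

lemma x0_01 [simp]: "x0 (ccons False (ccons True \<zeta>)) = ccons True (ccons False \<zeta>)"
  by (simp add: x0_def)

lemma x0_1 [simp]: "x0 (ccons True \<zeta>) = ccons True (ccons True \<zeta>)"
  by (simp add: x0_def)

definition x0_inv :: "cantor \<Rightarrow> cantor" where
  "x0_inv \<xi> = (if \<not> \<xi> 0 then ccons False (ccons False (ctail \<xi>))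
     else if \<not> \<xi> 1 then ccons False (ccons True (ctail (ctail \<xi>)))
     else ccons True (ctail (ctail \<xi>)))"

lemma x0_inv_0 [simp]: "x0_inv (ccons False \<zeta>) = ccons False (ccons False \<zeta>)"
  by (simp add: x0_inv_def)

lemma x0_inv_10 [simp]: "x0_inv (ccons True (ccons False \<zeta>)) = ccons False (ccons True \<zeta>)"
  by (simp add: x0_inv_def)

lemma x0_inv_11 [simp]: "x0_inv (ccons True (ccons True \<zeta>)) = ccons True \<zeta>"
  by (simp add: x0_inv_def)

lemma inv_x0: "hinv x0 = x0_inv"
proof (rule inv_unique_comp)
  show "x0 \<circ> x0_inv = id"
  proof
    fix \<xi> show "(x0 \<circ> x0_inv) \<xi> = id \<xi>"
      by (induct \<xi> rule: cantor_cases3) (simp add: all_bool_eq)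
  qed
  show "x0_inv \<circ> x0 = id"
  proof
    fix \<xi> show "(x0_inv \<circ> x0) \<xi> = id \<xi>"
      by (induct \<xi> rule: cantor_cases3) (simp add: all_bool_eq)
  qed
qed

section \<open>Homeomorphism groups and supports\<close>

lemma bij_inv_f_f: "bij f \<Longrightarrow> hinv f (f \<xi>) = \<xi>"
  by (simp add: bij_is_inj)

lemma bij_f_inv_f: "bij f \<Longrightarrow> f (hinv f \<xi>) = \<xi>"
  by (simp add: bij_is_surj surj_f_inv_f)

lemma is_homeoD:
  assumes "is_homeo h"
  shows "bij h" and "continuous_on UNIV h" and "continuous_on UNIV (hinv h)"
proof -
  obtain k where k: "homeomorphism UNIV UNIV h k"
    using assms is_homeo_def by blast
  then have hk: "\<And>x. k (h x) = x" "\<And>y. h (k y) = y"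
    and cont: "continuous_on UNIV h" "continuous_on UNIV k"
    by (auto simp: homeomorphism_def)
  show "bij h"
    by (metis bijI' hk)
  then have "hinv h = k"
    by (metis hk bij_inv_f_f ext)
  then show "continuous_on UNIV h" "continuous_on UNIV (hinv h)"
    using cont by simp_all
qed

lemma
  assumes "homeo_group S"
  shows homeo_group_id: "id \<in> S"
    and homeo_group_comp: "f \<in> S \<Longrightarrow> g \<in> S \<Longrightarrow> f \<circ> g \<in> S"
    and homeo_group_inv: "g \<in> S \<Longrightarrow> hinv g \<in> S"
    and homeo_group_is_homeo: "g \<in> S \<Longrightarrow> is_homeo g"
  using assms by (auto simp: homeo_group_def)

lemma group_homeo_grp:
  assumes "homeo_group S"
  shows "group (homeo_grp S)"
proof (rule groupI)
  fix g assume "g \<in> carrier (homeo_grp S)"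
  then have "hinv g \<in> S" "hinv g \<circ> g = id"
    using assms homeo_group_inv homeo_group_is_homeo is_homeoD(1)
    by (auto simp: homeo_grp_def bij_inv_f_f)
  then show "\<exists>h\<in>carrier (homeo_grp S). h \<otimes>\<^bsub>homeo_grp S\<^esub> g = \<one>\<^bsub>homeo_grp S\<^esub>"
    by (auto simp: homeo_grp_def)
qed (use assms homeo_group_id homeo_group_comp in \<open>auto simp: homeo_grp_def comp_assoc\<close>)

lemma inv_homeo_grp:
  assumes "homeo_group S" "g \<in> S"
  shows "inv\<^bsub>homeo_grp S\<^esub> g = hinv g"
proof (rule group.inv_equality[OF group_homeo_grp[OF assms(1)]])
  show "hinv g \<otimes>\<^bsub>homeo_grp S\<^esub> g = \<one>\<^bsub>homeo_grp S\<^esub>"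
    using assms homeo_group_is_homeo is_homeoD(1)
    by (auto simp: homeo_grp_def bij_inv_f_f)
qed (use assms homeo_group_inv in \<open>auto simp: homeo_grp_def\<close>)

lemma clopen_coordinate: "clopen {\<xi>::cantor. \<xi> i = b}"
proof -
  have "open {\<xi>::cantor. \<xi> i = c}" for c
  proof -
    have "{\<xi>::cantor. \<xi> i = c} = (\<lambda>\<xi>. \<xi> i) -` {c}"
      by auto
    then show ?thesis
      by (metis open_vimage open_discrete continuous_on_product_coordinates)
  qed
  moreover have "{\<xi>::cantor. \<xi> i = b} = - {\<xi>. \<xi> i = (\<not> b)}"
    by auto
  ultimately show ?thesis
    unfolding clopen_def closed_def by (metis double_compl)
qed

lemma clopen_Int: "clopen A \<Longrightarrow> clopen B \<Longrightarrow> clopen (A \<inter> B)"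
  by (simp add: clopen_def open_Int closed_Int)

lemma clopen_Un: "clopen A \<Longrightarrow> clopen B \<Longrightarrow> clopen (A \<union> B)"
  by (simp add: clopen_def open_Un closed_Un)

lemma clopen_Compl: "clopen A \<Longrightarrow> clopen (- A)"
  by (simp add: clopen_def open_Compl closed_Compl)

lemma clopen_vimage:
  assumes "continuous_on UNIV f" "clopen A"
  shows "clopen (f -` A)"
proof -
  have "open (f -` B)" if "open B" for B
    using assms(1) that open_vimage by blast
  moreover have "f -` (- A) = - (f -` A)"
    by auto
  ultimately show ?thesis
    using assms(2) unfolding clopen_def closed_def by (metis open_Compl)
qed

lemma clopen_image_homeo:
  assumes "is_homeo f" "clopen A"
  shows "clopen (f ` A)"
proof -
  have "f ` A = hinv f -` A"
    using is_homeoD(1)[OF assms(1)]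
    by (simp add: bij_vimage_eq_inv_image bij_imp_bij_inv inv_inv_eq)
  then show ?thesis
    using clopen_vimage[OF is_homeoD(3)[OF assms(1)] assms(2)] by simp
qed

lemma supported_on_mono: "supported_on f A \<Longrightarrow> A \<subseteq> B \<Longrightarrow> supported_on f B"
  unfolding supported_on_def by blast

lemma supported_on_inv:
  assumes "bij f" "supported_on f A"
  shows "supported_on (hinv f) A"
  using assms unfolding supported_on_def by (metis bij_inv_f_f)

lemma supported_on_conj:
  assumes "bij g" "supported_on f A"
  shows "supported_on (g \<circ> f \<circ> hinv g) (g ` A)"
  unfolding supported_on_def
proof (intro allI impI)
  fix \<xi> assume "\<xi> \<notin> g ` A"
  then have "hinv g \<xi> \<notin> A"
    using bij_f_inv_f[OF assms(1)] by (metis image_eqI)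
  then show "(g \<circ> f \<circ> hinv g) \<xi> = \<xi>"
    using assms by (simp add: supported_on_def bij_f_inv_f)
qed

lemma supported_on_maps_into:
  assumes "inj f" "supported_on f A" "\<xi> \<in> A"
  shows "f \<xi> \<in> A"
  using assms unfolding supported_on_def by (metis injD)

lemma supported_on_disjoint_apply:
  assumes "inj f" "supported_on f A" "supported_on g B" "A \<inter> B = {}" "\<xi> \<in> A"
  shows "f (g \<xi>) = g (f \<xi>)"
proof -
  have "f \<xi> \<notin> B" "\<xi> \<notin> B"
    using supported_on_maps_into[OF assms(1,2,5)] assms(4,5) by auto
  then show ?thesis
    using assms(3) by (simp add: supported_on_def)
qed

lemma supported_on_disjoint_commute:
  assumes "inj f" "supported_on f A" "inj g" "supported_on g B" "A \<inter> B = {}"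
  shows "f \<circ> g = g \<circ> f"
proof
  fix \<xi>
  consider "\<xi> \<in> A" | "\<xi> \<in> B" | "\<xi> \<notin> A" "\<xi> \<notin> B"
    by blast
  then show "(f \<circ> g) \<xi> = (g \<circ> f) \<xi>"
  proof cases
    case 1
    then show ?thesis
      using supported_on_disjoint_apply assms by simp
  next
    case 2
    then show ?thesis
      using supported_on_disjoint_apply[OF assms(3,4,2)] assms(5) by (simp add: Int_commute)
  next
    case 3
    then show ?thesis
      using assms(2,4) by (simp add: supported_on_def)
  qed
qed

definition commutator :: "(cantor \<Rightarrow> cantor) \<Rightarrow> (cantor \<Rightarrow> cantor) \<Rightarrow> cantor \<Rightarrow> cantor" where
  "commutator f g = f \<circ> g \<circ> hinv f \<circ> hinv g"

lemma commutator_conj: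
  assumes "bij h" "bij f" "bij g"
  shows "h \<circ> commutator f g \<circ> hinv h = commutator (h \<circ> f \<circ> hinv h) (h \<circ> g \<circ> hinv h)"
proof -
  have "hinv (h \<circ> f \<circ> hinv h) = h \<circ> hinv f \<circ> hinv h" if "bij f" for f
    by (rule inv_unique_comp) (use assms(1) that in \<open>simp_all add: fun_eq_iff bij_inv_f_f bij_f_inv_f\<close>)
  then show ?thesis
    using assms by (simp add: commutator_def comp_assoc) (simp add: fun_eq_iff bij_inv_f_f)
qed

lemma commutator_eqI:
  assumes "p \<circ> g \<circ> f = f \<circ> g" "bij f" "bij g"
  shows "p = commutator f g"
proof
  fix \<xi>
  have "p \<xi> = p (g (f (hinv f (hinv g \<xi>))))"
    using assms(2,3) by (simp add: bij_f_inv_f)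
  also have "\<dots> = f (g (hinv f (hinv g \<xi>)))"
    using assms(1) by (metis comp_apply)
  finally show "p \<xi> = commutator f g \<xi>"
    by (simp add: commutator_def)
qed

lemma continuous_on_UNIV_locally:
  fixes t :: "'a::topological_space \<Rightarrow> 'b::topological_space"
  assumes "\<And>x. \<exists>U g. open U \<and> x \<in> U \<and> continuous_on UNIV g \<and> (\<forall>y\<in>U. t y = g y)"
  shows "continuous_on UNIV t"
proof -
  have "open (t -` B)" if "open B" for B
  proof (subst open_subopen, intro ballI)
    fix x assume "x \<in> t -` B"
    obtain U g where U: "open U" "x \<in> U" "continuous_on UNIV g" "\<forall>y\<in>U. t y = g y"
      using assms by blast
    then have "open (U \<inter> g -` B)" "x \<in> U \<inter> g -` B" "U \<inter> g -` B \<subseteq> t -` B"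
      using \<open>open B\<close> \<open>x \<in> t -` B\<close> open_vimage by auto
    then show "\<exists>T. open T \<and> x \<in> T \<and> T \<subseteq> t -` B"
      by blast
  qed
  then show ?thesis
    by (simp add: continuous_on_open_vimage)
qed

lemma full_memI_involution:
  assumes S: "homeo_group S" "full S"
    and inv: "t \<circ> t = id"
    and loc: "\<And>\<xi>. \<exists>U. open U \<and> \<xi> \<in> U \<and> (\<exists>g\<in>S. \<forall>\<eta>\<in>U. t \<eta> = g \<eta>)"
  shows "t \<in> S"
proof -
  have "continuous_on UNIV t"
  proof (rule continuous_on_UNIV_locally)
    fix \<xi>
    obtain U g where "open U" "\<xi> \<in> U" "g \<in> S" "\<forall>\<eta>\<in>U. t \<eta> = g \<eta>"
      using loc by blast
    then show "\<exists>U g. open U \<and> \<xi> \<in> U \<and> continuous_on UNIV g \<and> (\<forall>\<eta>\<in>U. t \<eta> = g \<eta>)"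
      using is_homeoD(2)[OF homeo_group_is_homeo[OF S(1)]] by blast
  qed
  moreover have tt: "\<And>\<xi>. t (t \<xi>) = \<xi>"
    using inv by (simp add: fun_eq_iff)
  then have "range t = UNIV"
    by (metis surjI)
  ultimately have "homeomorphism UNIV UNIV t t"
    unfolding homeomorphism_def using tt by simp
  then show ?thesis
    using S(2) loc unfolding full_def is_homeo_def by blast
qed

definition swap_on :: "(cantor \<Rightarrow> cantor) \<Rightarrow> cantor set \<Rightarrow> cantor \<Rightarrow> cantor" where
  "swap_on f A \<xi> = (if \<xi> \<in> A then f \<xi> else if \<xi> \<in> f ` A then hinv f \<xi> else \<xi>)"

lemma swap_on_involution:
  assumes "bij f" "f ` A \<inter> A = {}"
  shows "swap_on f A \<circ> swap_on f A = id"
proof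
  fix \<xi>
  consider "\<xi> \<in> A" | "\<xi> \<in> f ` A" | "\<xi> \<notin> A" "\<xi> \<notin> f ` A"
    by blast
  then show "(swap_on f A \<circ> swap_on f A) \<xi> = id \<xi>"
  proof cases
    case 1
    then show ?thesis
      using assms by (auto simp: swap_on_def bij_inv_f_f)
  next
    case 2
    then have "hinv f \<xi> \<in> A" "\<xi> \<notin> A"
      using assms by (auto simp: bij_inv_f_f)
    then show ?thesis
      using 2 assms by (simp add: swap_on_def bij_f_inv_f)
  next
    case 3
    then show ?thesis
      by (simp add: swap_on_def)
  qed
qed

lemma supported_on_swap_on: "supported_on (swap_on f A) (A \<union> f ` A)"
  by (simp add: supported_on_def swap_on_def)

lemma supported_on_swap_on_comp:
  assumes "bij f" "f ` A \<inter> A = {}"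
  shows "supported_on (swap_on f A \<circ> f) (- A)"
  using assms by (auto simp: supported_on_def swap_on_def bij_inv_f_f)

lemma swap_on_mem:
  assumes S: "homeo_group S" "full S" and f: "f \<in> S" and A: "clopen A" "f ` A \<inter> A = {}"
  shows "swap_on f A \<in> S"
proof (rule full_memI_involution[OF S])
  have f_homeo: "is_homeo f"
    using homeo_group_is_homeo[OF S(1) f] .
  show "swap_on f A \<circ> swap_on f A = id"
    using swap_on_involution[OF is_homeoD(1)[OF f_homeo] A(2)] .
  have fA: "clopen (f ` A)"
    using clopen_image_homeo[OF f_homeo A(1)] .
  fix \<xi>
  consider "\<xi> \<in> A" | "\<xi> \<in> f ` A" | "\<xi> \<in> - (A \<union> f ` A)"
    by blast
  then show "\<exists>U. open U \<and> \<xi> \<in> U \<and> (\<exists>g\<in>S. \<forall>\<eta>\<in>U. swap_on f A \<eta> = g \<eta>)"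
  proof cases
    case 1
    then show ?thesis
      using A(1) f by (intro exI[of _ A]) (auto simp: clopen_def swap_on_def)
  next
    case 2
    then show ?thesis
      using fA A(2) homeo_group_inv[OF S(1) f]
      by (intro exI[of _ "f ` A"]) (auto simp: clopen_def swap_on_def)
  next
    case 3
    then show ?thesis
      using A(1) fA homeo_group_id[OF S(1)]
      by (intro exI[of _ "- (A \<union> f ` A)"]) (auto simp: clopen_def swap_on_def intro!: bexI[of _ id])
  qed
qed

lemma displaced_clopen:
  assumes "continuous_on UNIV f" "f \<noteq> id"
  obtains A where "clopen A" "A \<noteq> {}" "f ` A \<inter> A = {}" "A \<union> f ` A \<noteq> UNIV"
proof -
  obtain \<xi> i where i: "f \<xi> i \<noteq> \<xi> i"
    using assms(2) by (auto simp: fun_eq_iff)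
  \<comment> \<open>The condition on coordinate \<open>Suc i\<close> only keeps a point outside \<open>A \<union> f ` A\<close>.\<close>
  define A where "A = {\<eta>. \<eta> i = \<xi> i} \<inter> {\<eta>. \<eta> (Suc i) = \<xi> (Suc i)} \<inter> f -` {\<eta>. \<eta> i = f \<xi> i}"
  define \<xi>' where "\<xi>' = \<xi>(Suc i := \<not> \<xi> (Suc i))"
  have A_coord: "\<eta> i = \<xi> i" if "\<eta> \<in> A" for \<eta>
    using that by (simp add: A_def)
  have image_coord: "\<eta> i = f \<xi> i" if "\<eta> \<in> f ` A" for \<eta>
    using that by (auto simp: A_def)
  show ?thesis
  proof (rule that)
    show "clopen A"
      unfolding A_def by (intro clopen_Int clopen_coordinate clopen_vimage assms(1))
    have "\<xi> \<in> A"
      by (simp add: A_def)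
    then show "A \<noteq> {}"
      by blast
    show "f ` A \<inter> A = {}"
      using i A_coord image_coord by blast
    have "\<xi>' i = \<xi> i"
      by (simp add: \<xi>'_def)
    then have "\<xi>' \<notin> f ` A"
      using i image_coord by metis
    moreover have "\<xi>' \<notin> A"
      by (simp add: A_def \<xi>'_def)
    ultimately show "A \<union> f ` A \<noteq> UNIV"
      by blast
  qed
qed

section \<open>Normal subgroups\<close>

locale normal_homeo_subgroup =
  fixes S N :: "(cantor \<Rightarrow> cantor) set"
  assumes homeo_group: "homeo_group S"
    and normal: "N \<lhd> homeo_grp S"
begin

lemma bij_of_mem: "g \<in> S \<Longrightarrow> bij g"
  using homeo_group homeo_group_is_homeo is_homeoD(1) by blast

lemma N_subset: "N \<subseteq> S"
  using subgroup.subset[OF normal_imp_subgroup[OF normal]] by (simp add: homeo_grp_def)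

lemma id_mem: "id \<in> N"
  using subgroup.one_closed[OF normal_imp_subgroup[OF normal]] by (simp add: homeo_grp_def)

lemma comp_mem: "f \<in> N \<Longrightarrow> g \<in> N \<Longrightarrow> f \<circ> g \<in> N"
  using subgroup.m_closed[OF normal_imp_subgroup[OF normal]] by (simp add: homeo_grp_def)

lemma inv_mem:
  assumes "f \<in> N"
  shows "hinv f \<in> N"
proof -
  have "inv\<^bsub>homeo_grp S\<^esub> f \<in> N"
    using subgroup.m_inv_closed[OF normal_imp_subgroup[OF normal] assms] .
  then show ?thesis
    using inv_homeo_grp[OF homeo_group subsetD[OF N_subset assms]] by simp
qed

lemma conj_mem: "g \<in> S \<Longrightarrow> f \<in> N \<Longrightarrow> g \<circ> f \<circ> hinv g \<in> N"
  using normal.inv_op_closed2[OF normal, of g f] inv_homeo_grp[OF homeo_group]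
  by (simp add: homeo_grp_def)

lemma conj_mem_iff:
  assumes "g \<in> S"
  shows "g \<circ> f \<circ> hinv g \<in> N \<longleftrightarrow> f \<in> N"
proof
  assume "g \<circ> f \<circ> hinv g \<in> N"
  then have "hinv g \<circ> (g \<circ> f \<circ> hinv g) \<circ> hinv (hinv g) \<in> N"
    using conj_mem homeo_group_inv[OF homeo_group assms] by blast
  moreover have "hinv g \<circ> (g \<circ> f \<circ> hinv g) \<circ> hinv (hinv g) = f"
    using bij_of_mem[OF assms] by (simp add: fun_eq_iff inv_inv_eq bij_inv_f_f)
  ultimately show "f \<in> N"
    by simp
qed (rule conj_mem[OF assms])

lemma commutator_mem_if_displaced:
  assumes n: "n \<in> N" "n ` E \<inter> E = {}"
    and a: "a \<in> S" "supported_on a E" and b: "b \<in> S" "supported_on b E"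
  shows "commutator a b \<in> N"
proof -
  have nS: "n \<in> S"
    using n(1) N_subset by blast
  define d where "d = n \<circ> hinv a \<circ> hinv n"
  define c where "c = a \<circ> d"
  have bij: "bij a" "bij b" "bij n" "bij d"
    using a(1) b(1) nS homeo_group_comp homeo_group_inv homeo_group bij_of_mem
    unfolding d_def by auto
  have "supported_on d (n ` E)"
    unfolding d_def by (rule supported_on_conj[OF bij(3) supported_on_inv[OF bij(1) a(2)]])
  then have "supported_on (hinv d) (n ` E)"
    using supported_on_inv bij(4) by blast
  moreover have "E \<inter> n ` E = {}"
    using n(2) by blast
  ultimately have commute: "b \<circ> hinv d = hinv d \<circ> b"
    using supported_on_disjoint_commute[OF bij_is_inj[OF bij(2)] b(2) bij_is_inj[OF bij_imp_bij_inv[OF bij(4)]]]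
    by blast
  have "c = (a \<circ> n \<circ> hinv a) \<circ> hinv n"
    by (simp add: c_def d_def comp_assoc)
  then have cN: "c \<in> N"
    by (simp add: comp_mem conj_mem inv_mem a(1) n(1))
  then have "c \<circ> (b \<circ> hinv c \<circ> hinv b) \<in> N"
    by (intro comp_mem conj_mem inv_mem b(1))
  moreover have "c \<circ> (b \<circ> hinv c \<circ> hinv b) = commutator a b"
  proof -
    have "hinv c = hinv d \<circ> hinv a"
      unfolding c_def by (rule o_inv_distrib[OF bij(1,4)])
    moreover have "b (hinv d \<xi>) = hinv d (b \<xi>)" for \<xi>
      using commute by (metis comp_apply)
    ultimately show ?thesis
      using bij(4) by (intro ext) (simp add: c_def commutator_def bij_f_inv_f)
  qed
  ultimately show ?thesis
    by simp
qed

lemma commutator_mem_if_flexible: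
  assumes "flexible S" "N \<noteq> {id}"
    and F: "clopen F" "F \<noteq> {}" "F \<noteq> UNIV"
    and a: "a \<in> S" "supported_on a F" and b: "b \<in> S" "supported_on b F"
  shows "commutator a b \<in> N"
proof -
  obtain n where n: "n \<in> N" "n \<noteq> id"
    using assms(2) id_mem by blast
  have "continuous_on UNIV n"
    using is_homeoD(2) homeo_group_is_homeo[OF homeo_group] n(1) N_subset by blast
  then obtain E where E: "clopen E" "E \<noteq> {}" "n ` E \<inter> E = {}" "E \<union> n ` E \<noteq> UNIV"
    using n(2) by (rule displaced_clopen)
  then have "E \<noteq> UNIV"
    by blast
  then obtain g where g: "g \<in> S" "g ` F \<subseteq> E"
    using assms(1) F E(1,2) unfolding flexible_def by blast
  have "supported_on (g \<circ> f \<circ> hinv g) E" if "supported_on f F" for f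
    using supported_on_mono[OF supported_on_conj[OF bij_of_mem[OF g(1)] that] g(2)] .
  then have "commutator (g \<circ> a \<circ> hinv g) (g \<circ> b \<circ> hinv g) \<in> N"
    using commutator_mem_if_displaced[OF n(1) E(3)] a b g(1) homeo_group
    by (simp add: homeo_group_comp homeo_group_inv)
  then have "g \<circ> commutator a b \<circ> hinv g \<in> N"
    by (simp only: commutator_conj[OF bij_of_mem[OF g(1)] bij_of_mem[OF a(1)] bij_of_mem[OF b(1)]])
  then show ?thesis
    using conj_mem_iff[OF g(1)] by blast
qed

end

section \<open>Self-similar groups\<close>

definition I00 :: "cantor set" where "I00 = {\<xi>. \<not> \<xi> 0 \<and> \<not> \<xi> 1}"
definition I10 :: "cantor set" where "I10 = {\<xi>. \<xi> 0 \<and> \<not> \<xi> 1}"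

lemma clopen_I00: "clopen I00"
proof -
  have eq: "I00 = {\<xi>. \<xi> 0 = False} \<inter> {\<xi>. \<xi> 1 = False}"
    by (auto simp: I00_def)
  show ?thesis
    unfolding eq by (intro clopen_Int clopen_coordinate)
qed

lemma clopen_I10: "clopen I10"
proof -
  have eq: "I10 = {\<xi>. \<xi> 0 = True} \<inter> {\<xi>. \<xi> 1 = False}"
    by (auto simp: I10_def)
  show ?thesis
    unfolding eq by (intro clopen_Int clopen_coordinate)
qed

lemma I00_nontrivial: "I00 \<noteq> {}" "I00 \<noteq> UNIV"
proof -
  have "ccons False (ccons False \<zeta>) \<in> I00" "ccons True \<zeta> \<notin> I00" for \<zeta>
    by (simp_all add: I00_def)
  then show "I00 \<noteq> {}" "I00 \<noteq> UNIV"
    by blast+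
qed

lemma I10_nontrivial: "I10 \<noteq> {}" "I10 \<noteq> UNIV"
proof -
  have "ccons True (ccons False \<zeta>) \<in> I10" "ccons False \<zeta> \<notin> I10" for \<zeta>
    by (simp_all add: I10_def)
  then show "I10 \<noteq> {}" "I10 \<noteq> UNIV"
    by blast+
qed

definition y0 :: "cantor \<Rightarrow> cantor" where
  "y0 = x0 \<circ> pair_homeo x0_inv id"

lemma y0_00 [simp]: "y0 (ccons False (ccons False \<zeta>)) = ccons False (ccons False \<zeta>)"
  by (simp add: y0_def)

lemma y0_010 [simp]: "y0 (ccons False (ccons True (ccons False \<zeta>))) = ccons False (ccons True \<zeta>)"
  by (simp add: y0_def)

lemma y0_011 [simp]: "y0 (ccons False (ccons True (ccons True \<zeta>))) = ccons True (ccons False \<zeta>)"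
  by (simp add: y0_def)

lemma y0_1 [simp]: "y0 (ccons True \<zeta>) = ccons True (ccons True \<zeta>)"
  by (simp add: y0_def)

lemma supported_on_y0: "supported_on y0 (- I00)"
proof -
  have "\<xi> \<in> I00 \<longrightarrow> y0 \<xi> = \<xi>" for \<xi>
    by (induct \<xi> rule: cantor_cases3) (simp add: all_bool_eq I00_def)
  then show ?thesis
    by (simp add: supported_on_def)
qed

lemma supported_on_pair_id: "supported_on (pair_homeo id h) I1"
  by (simp add: supported_on_def pair_homeo_def I1_def) (metis ccons_ctail)

lemma commutator_pair_id_y0:
  assumes h: "h = pair_homeo g h" and bij: "bij (pair_homeo id h)" "bij y0"
  shows "commutator (pair_homeo id h) y0 = pair_homeo id (pair_homeo g id)"
proof -
  have h_0: "h (ccons False \<zeta>) = ccons False (g \<zeta>)" for \<zeta>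
    using fun_cong[OF h, of "ccons False \<zeta>"] by simp
  have h_1: "h (ccons True \<zeta>) = ccons True (h \<zeta>)" for \<zeta>
    using fun_cong[OF h, of "ccons True \<zeta>"] by simp
  have "pair_homeo id (pair_homeo g id) \<circ> y0 \<circ> pair_homeo id h = pair_homeo id h \<circ> y0"
  proof
    fix \<xi>
    show "(pair_homeo id (pair_homeo g id) \<circ> y0 \<circ> pair_homeo id h) \<xi> = (pair_homeo id h \<circ> y0) \<xi>"
      by (induct \<xi> rule: cantor_cases3) (simp add: all_bool_eq h_0 h_1)
  qed
  then show ?thesis
    using commutator_eqI[OF _ bij] by simp
qed

locale self_similar_normal_subgroup = normal_homeo_subgroup +
  assumes full: "full S"
    and flexible: "flexible S"
    and pair_mem: "\<forall>g\<in>S. pair_homeo id g \<in> S \<and> pair_homeo g id \<in> S"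
    and supported_I0: "\<forall>f\<in>S. supported_on f I0 \<longrightarrow> (\<exists>g\<in>S. f = pair_homeo g id)"
    and supported_I1: "\<forall>f\<in>S. supported_on f I1 \<longrightarrow> (\<exists>g\<in>S. f = pair_homeo id g)"
    and fixed_point: "\<forall>g\<in>S. \<exists>h\<in>S. h = pair_homeo g h"
    and x0_mem: "x0 \<in> S"
    and nontrivial: "N \<noteq> {id}"
begin

lemma y0_mem: "y0 \<in> S"
  unfolding y0_def using x0_mem pair_mem homeo_group_comp[OF homeo_group]
    homeo_group_inv[OF homeo_group x0_mem] inv_x0 homeo_group_id[OF homeo_group]
  by simp

lemma pair_id_pair_mem:
  assumes "g \<in> S"
  shows "pair_homeo id (pair_homeo g id) \<in> N"
proof -
  obtain h where h: "h \<in> S" "h = pair_homeo g h"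
    using fixed_point assms by blast
  then have k: "pair_homeo id h \<in> S"
    using pair_mem by blast
  have "supported_on (pair_homeo id h) (- I00)"
    using supported_on_pair_id by (rule supported_on_mono) (auto simp: I1_def I00_def)
  then have "commutator (pair_homeo id h) y0 \<in> N"
    using commutator_mem_if_flexible[OF flexible nontrivial clopen_Compl[OF clopen_I00]]
      I00_nontrivial k y0_mem supported_on_y0 by auto
  then show ?thesis
    using commutator_pair_id_y0[OF h(2) bij_of_mem[OF k] bij_of_mem[OF y0_mem]] by simp
qed

lemma mem_if_supported_on_I10:
  assumes f: "f \<in> S" "supported_on f I10"
  shows "f \<in> N"
proof -
  have "supported_on f I1"
    using f(2) by (rule supported_on_mono) (auto simp: I10_def I1_def)
  then obtain g' where g': "g' \<in> S" "f = pair_homeo id g'"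
    using supported_I1 f(1) by blast
  have "supported_on g' I0"
    unfolding supported_on_def
  proof (intro allI impI)
    fix \<zeta> assume "\<zeta> \<notin> I0"
    then have "ccons True \<zeta> \<notin> I10"
      by (simp add: I0_def I10_def)
    then have "f (ccons True \<zeta>) = ccons True \<zeta>"
      using f(2) by (simp add: supported_on_def)
    then show "g' \<zeta> = \<zeta>"
      using g'(2) by simp
  qed
  then obtain g where "g \<in> S" "g' = pair_homeo g id"
    using supported_I0 g'(1) by blast
  then show ?thesis
    using pair_id_pair_mem g'(2) by simp
qed

lemma mem_if_supported_on_clopen:
  assumes f: "f \<in> S" "supported_on f F" and F: "clopen F" "F \<noteq> UNIV"
  shows "f \<in> N"
proof (cases "F = {}")
  case True
  then have "f = id"
    using f(2) by (auto simp: supported_on_def)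
  then show ?thesis
    using id_mem by simp
next
  case False
  then obtain g where g: "g \<in> S" "g ` F \<subseteq> I10"
    using flexible F clopen_I10 I10_nontrivial unfolding flexible_def by blast
  have "supported_on (g \<circ> f \<circ> hinv g) I10"
    using supported_on_mono[OF supported_on_conj[OF bij_of_mem[OF g(1)] f(2)] g(2)] .
  then have "g \<circ> f \<circ> hinv g \<in> N"
    using mem_if_supported_on_I10 f(1) g(1) homeo_group homeo_group_comp homeo_group_inv by blast
  then show ?thesis
    using conj_mem_iff[OF g(1)] by blast
qed

lemma S_subset_N: "S \<subseteq> N"
proof
  fix f assume f: "f \<in> S"
  show "f \<in> N"
  proof (cases "f = id")
    case True
    then show ?thesis
      using id_mem by simp
  next
    case False
    have f_homeo: "is_homeo f"
      using homeo_group_is_homeo[OF homeo_group f] .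
    obtain A where A: "clopen A" "A \<noteq> {}" "f ` A \<inter> A = {}" "A \<union> f ` A \<noteq> UNIV"
      using displaced_clopen[OF is_homeoD(2)[OF f_homeo] False] by blast
    define t where "t = swap_on f A"
    have t: "t \<in> S"
      unfolding t_def using swap_on_mem[OF homeo_group full f A(1,3)] .
    have "t \<in> N"
      using mem_if_supported_on_clopen[OF t] supported_on_swap_on
        clopen_Un[OF A(1) clopen_image_homeo[OF f_homeo A(1)]] A(4)
      unfolding t_def by blast
    moreover have "t \<circ> f \<in> N"
      using mem_if_supported_on_clopen homeo_group_comp[OF homeo_group t f]
        supported_on_swap_on_comp[OF is_homeoD(1)[OF f_homeo] A(3)] clopen_Compl[OF A(1)] A(2)
      unfolding t_def by blast
    moreover have "f = t \<circ> (t \<circ> f)"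
      using swap_on_involution[OF is_homeoD(1)[OF f_homeo] A(3)]
      unfolding t_def by (simp flip: comp_assoc)
    ultimately show ?thesis
      using comp_mem by metis
  qed
qed

end

theorem theorem2p10:
  fixes S :: "(cantor \<Rightarrow> cantor) set"
  assumes "homeo_group S"
    and "full S"
    and "flexible S"
    and "\<forall>g\<in>S. pair_homeo id g \<in> S \<and> pair_homeo g id \<in> S"
    and "\<forall>f\<in>S. supported_on f I0 \<longrightarrow> (\<exists>g\<in>S. f = pair_homeo g id)"
    and "\<forall>f\<in>S. supported_on f I1 \<longrightarrow> (\<exists>g\<in>S. f = pair_homeo id g)"
    and "\<forall>g\<in>S. \<exists>h\<in>S. h = pair_homeo g h"
    and "x0 \<in> S"
  shows "simple_grp (homeo_grp S)"
proof -
  have "x0 (ccons False (ccons True \<zeta>)) \<noteq> ccons False (ccons True \<zeta>)" for \<zeta>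
    by simp
  then have "x0 \<noteq> id"
    by (metis id_apply)
  then have "carrier (homeo_grp S) \<noteq> {\<one>\<^bsub>homeo_grp S\<^esub>}"
    using assms(8) by (auto simp: homeo_grp_def)
  moreover have "N = {\<one>\<^bsub>homeo_grp S\<^esub>} \<or> N = carrier (homeo_grp S)"
    if "N \<lhd> homeo_grp S" for N
  proof (cases "N = {id}")
    case False
    then interpret self_similar_normal_subgroup S N
      using assms that
      by (simp add: self_similar_normal_subgroup_def self_similar_normal_subgroup_axioms_def
          normal_homeo_subgroup_def)
    show ?thesis
      using N_subset S_subset_N by (simp add: homeo_grp_def)
  qed (simp add: homeo_grp_def)
  ultimately show ?thesis
    unfolding simple_grp_def using group_homeo_grp[OF assms(1)] by blast
qed

end
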